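(* Let $d$ be a nonnegative integer and let $H$ be a multigraph of even order with $\Delta(H) \le d+1$, having exactly $r$ vertices of degree $d+1$, and with $d+1 < \Gamma(H) \le d+2$. Let $S \subseteq V(H)$ with $|S|$ odd, $|S|\ge 3$, such that $\langle S\rangle$ is $(d+1)$-overfull in $H$ and $\operatorname{sl}(\langle S\rangle, d+1)$ is minimum among all $(d+1)$-overfull induced odd-order subgraphs of $H$. Then $\Delta(H_S)\le d+1$, $\Gamma(H_S)\le d+2$, and $H_S$ has at most $r$ vertices of degree $d+1$; similarly $\Delta(H_{S^c})\le d+1$, $\Gamma(H_{S^c})\le d+2$, and $H_{S^c}$ has at most $r$ vertices of degree $d+1$, where $S^c=V(H)\setminus S$.
   Context: Multigraphs are finite and loopless, multiple edges allowed. For $S \subseteq V(H)$, $\langle S\rangle$ is the induced subgraph. For a multigraph $K$ of odd order $n(K)\ge 3$ with $e(K)$ edges, $t(K) = 2e(K)/(n(K)-1)$; $K$ is $k$-overfull if $t(K)>k$. The $k$-slack is $\operatorname{sl}(K,k) = (k+1)(n(K)-1)/2 - e(K)$. $\Gamma(H) = \max\{t(\langle R\rangle) : R\subseteq V(H), |R| \text{ odd}, |R|\ge 3\}$ (statements about $\Gamma$ of a multigraph with no such $R$ are vacuous). Shrinking: for a nonempty proper subset $S$ of $V(H)$, $H_S$ has vertex set $(V(H)\setminus S)\cup\{s\}$ for a new vertex $s$; its edges are the edges of $H - S$ together with, for each $u \notin S$, exactly as many edges $us$ as there are edges of $H$ joining $u$ to vertices of $S$. *)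

theory Defs
  imports Complex_Main
begin

definition multigraph :: "'a set \<Rightarrow> ('a \<Rightarrow> 'a \<Rightarrow> nat) \<Rightarrow> bool" where
  "multigraph V m \<longleftrightarrow> finite V \<and> (\<forall>x y. m x y = m y x) \<and> (\<forall>x. m x x = 0)
     \<and> (\<forall>x y. m x y > 0 \<longrightarrow> x \<in> V \<and> y \<in> V)"

definition deg :: "'a set \<Rightarrow> ('a \<Rightarrow> 'a \<Rightarrow> nat) \<Rightarrow> 'a \<Rightarrow> nat" where
  "deg V m v = (\<Sum>u\<in>V. m v u)"

definition maxdeg :: "'a set \<Rightarrow> ('a \<Rightarrow> 'a \<Rightarrow> nat) \<Rightarrow> nat" where
  "maxdeg V m = Max (deg V m ` V)"

definition edges_in :: "('a \<Rightarrow> 'a \<Rightarrow> nat) \<Rightarrow> 'a set \<Rightarrow> nat" where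
  "edges_in m R = (\<Sum>x\<in>R. \<Sum>y\<in>R. m x y) div 2"

definition tval :: "('a \<Rightarrow> 'a \<Rightarrow> nat) \<Rightarrow> 'a set \<Rightarrow> real" where
  "tval m R = 2 * real (edges_in m R) / (real (card R) - 1)"

definition overfull :: "('a \<Rightarrow> 'a \<Rightarrow> nat) \<Rightarrow> 'a set \<Rightarrow> nat \<Rightarrow> bool" where
  "overfull m R k \<longleftrightarrow> odd (card R) \<and> card R \<ge> 3 \<and> tval m R > real k"

definition slack :: "('a \<Rightarrow> 'a \<Rightarrow> nat) \<Rightarrow> 'a set \<Rightarrow> nat \<Rightarrow> int" where
  "slack m R k = int ((k + 1) * (card R - 1) div 2) - int (edges_in m R)"

definition odd_sets :: "'a set \<Rightarrow> 'a set set" where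
  "odd_sets V = {R. R \<subseteq> V \<and> odd (card R) \<and> card R \<ge> 3}"

definition Gamma :: "'a set \<Rightarrow> ('a \<Rightarrow> 'a \<Rightarrow> nat) \<Rightarrow> real" where
  "Gamma V m = Max (tval m ` odd_sets V)"

text \<open>Shrinking S to a new vertex: old vertices u become Some u, the new vertex is None.\<close>
definition shrinkV :: "'a set \<Rightarrow> 'a set \<Rightarrow> 'a option set" where
  "shrinkV V S = Some ` (V - S) \<union> {None}"

fun shrinkM :: "'a set \<Rightarrow> ('a \<Rightarrow> 'a \<Rightarrow> nat) \<Rightarrow> 'a set \<Rightarrow> 'a option \<Rightarrow> 'a option \<Rightarrow> nat" where
  "shrinkM V m S (Some u) (Some v) = (if u \<notin> S \<and> v \<notin> S then m u v else 0)"
| "shrinkM V m S (Some u) None = (if u \<in> V - S then (\<Sum>w\<in>S. m u w) else 0)"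
| "shrinkM V m S None (Some v) = (if v \<in> V - S then (\<Sum>w\<in>S. m v w) else 0)"
| "shrinkM V m S None None = 0"

definition num_deg :: "'a set \<Rightarrow> ('a \<Rightarrow> 'a \<Rightarrow> nat) \<Rightarrow> nat \<Rightarrow> nat" where
  "num_deg V m k = card {v \<in> V. deg V m v = k}"

end

theory Submission
  imports Defs
begin

text \<open>Write \<open>e(A,B)\<close> for the number of edge-ends joining \<open>A\<close> to \<open>B\<close>, so that
  \<open>e(R,R) = 2 e(\<langle>R\<rangle>)\<close> and \<open>\<langle>R\<rangle>\<close> is \<open>k\<close>-overfull iff \<open>e(R,R) > k(|R| - 1)\<close>.
  Since \<open>\<Delta>(H) \<le> d + 1\<close>, overfullness of \<open>S\<close> leaves fewer than \<open>d + 1\<close> edges between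
  \<open>S\<close> and \<open>S\<^sup>c\<close>. Hence in either contraction the new vertex has degree at most \<open>d\<close>
  and all other vertices keep their degrees, which gives the bounds on \<open>\<Delta>\<close> and on the number
  of vertices of degree \<open>d + 1\<close>.

  An odd set of a contraction avoiding the new vertex is an odd set of \<open>H\<close>. One containing
  it is \<open>A\<close> plus the new vertex for some even set \<open>A\<close> disjoint from the contracted side \<open>X\<close>,
  and the bound \<open>\<Gamma> \<le> d + 2\<close> for it amounts to \<open>e(A,A) + 2 e(A,X) \<le> (d + 2)|A|\<close>.
  If this failed, then \<open>A \<union> S\<close> (for \<open>X = S\<close>) or \<open>S - A\<close> (for \<open>X = S\<^sup>c\<close>) would be an
  overfull odd set of smaller slack than \<open>S\<close>.\<close>

definition edges_between :: "('a \<Rightarrow> 'a \<Rightarrow> nat) \<Rightarrow> 'a set \<Rightarrow> 'a set \<Rightarrow> nat" where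
  "edges_between m A B = (\<Sum>x\<in>A. \<Sum>y\<in>B. m x y)"

lemma edges_between_Un_left:
  "finite A \<Longrightarrow> finite B \<Longrightarrow> A \<inter> B = {} \<Longrightarrow>
    edges_between m (A \<union> B) C = edges_between m A C + edges_between m B C"
  unfolding edges_between_def by (rule sum.union_disjoint)

lemma edges_between_Un_right:
  "finite A \<Longrightarrow> finite B \<Longrightarrow> A \<inter> B = {} \<Longrightarrow>
    edges_between m C (A \<union> B) = edges_between m C A + edges_between m C B"
  unfolding edges_between_def by (simp add: sum.union_disjoint sum.distrib)

lemma edges_between_commute:
  assumes "multigraph V m"
  shows "edges_between m A B = edges_between m B A"
proof -
  have "\<And>x y. m x y = m y x" using assms by (simp add: multigraph_def)
  then show ?thesis unfolding edges_between_def by (subst sum.swap) simp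
qed

lemma edges_between_disjoint_Un_self:
  assumes "multigraph V m" "finite A" "finite B" "A \<inter> B = {}"
  shows "edges_between m (A \<union> B) (A \<union> B)
    = edges_between m A A + 2 * edges_between m A B + edges_between m B B"
  using assms edges_between_commute[OF assms(1), of B A]
  by (simp add: edges_between_Un_left edges_between_Un_right)

lemma edges_between_singleton_self: "multigraph V m \<Longrightarrow> edges_between m {a} {a} = 0"
  by (simp add: edges_between_def multigraph_def)

lemma even_edges_between_self:
  assumes "multigraph V m" "finite R"
  shows "even (edges_between m R R)"
  using assms(2)
proof (induction R rule: finite_induct)
  case empty
  then show ?case by (simp add: edges_between_def)
next
  case (insert a R)
  then show ?case
    using edges_between_disjoint_Un_self[OF assms(1), of "{a}" R]
      edges_between_singleton_self[OF assms(1)] by simp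
qed

lemma edges_in_eq_half: "edges_in m R = edges_between m R R div 2"
  by (simp add: edges_in_def edges_between_def)

lemma tval_eq_edges_between:
  assumes "multigraph V m" "finite R"
  shows "tval m R = real (edges_between m R R) / (real (card R) - 1)"
proof -
  have "2 * edges_in m R = edges_between m R R"
    using even_edges_between_self[OF assms] by (simp add: edges_in_eq_half)
  then show ?thesis
    unfolding tval_def by (metis of_nat_mult of_nat_numeral)
qed

lemma tval_gt_iff:
  assumes "multigraph V m" "finite R" "card R \<ge> 3"
  shows "real k < tval m R \<longleftrightarrow> k * (card R - 1) < edges_between m R R"
proof -
  have "real (card R) - 1 = real (card R - 1)" "real (card R - 1) > 0"
    using assms(3) by auto
  then have "real k < tval m R \<longleftrightarrow> real (k * (card R - 1)) < real (edges_between m R R)"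
    unfolding tval_eq_edges_between[OF assms(1,2)] by (simp add: pos_less_divide_eq)
  then show ?thesis by linarith
qed

lemma slack_double_eq:
  assumes "multigraph V m" "finite R" "odd (card R)"
  shows "2 * slack m R k = int ((k + 1) * (card R - 1)) - int (edges_between m R R)"
proof -
  obtain j where j: "card R - 1 = 2 * j" using assms(3) by (metis odd_two_times_div_two_nat)
  obtain e where e: "edges_between m R R = 2 * e" using even_edges_between_self[OF assms(1,2)] ..
  show ?thesis unfolding slack_def edges_in_eq_half j e by (simp add: mult.left_commute)
qed

lemma deg_le_maxdeg: "finite V \<Longrightarrow> v \<in> V \<Longrightarrow> deg V m v \<le> maxdeg V m"
  unfolding maxdeg_def by simp

lemma maxdeg_le_iff:
  "finite V \<Longrightarrow> V \<noteq> {} \<Longrightarrow> maxdeg V m \<le> k \<longleftrightarrow> (\<forall>v\<in>V. deg V m v \<le> k)"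
  unfolding maxdeg_def by simp

lemma finite_odd_sets: "finite V \<Longrightarrow> finite (odd_sets V)"
  by (rule finite_subset[of _ "Pow V"]) (auto simp: odd_sets_def)

lemma tval_le_Gamma: "finite V \<Longrightarrow> R \<in> odd_sets V \<Longrightarrow> tval m R \<le> Gamma V m"
  unfolding Gamma_def by (simp add: finite_odd_sets)

lemma Gamma_le_iff:
  "finite V \<Longrightarrow> odd_sets V \<noteq> {} \<Longrightarrow> Gamma V m \<le> c \<longleftrightarrow> (\<forall>R\<in>odd_sets V. tval m R \<le> c)"
  unfolding Gamma_def by (simp add: finite_odd_sets)

lemma edges_between_le_degree_bound:
  assumes "A \<subseteq> V" "\<forall>v\<in>V. deg V m v \<le> k"
  shows "edges_between m A V \<le> k * card A"
proof -
  have "edges_between m A V = (\<Sum>a\<in>A. deg V m a)"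
    unfolding edges_between_def deg_def ..
  also have "\<dots> \<le> (\<Sum>a\<in>A. k)" using assms by (intro sum_mono) auto
  finally show ?thesis by (simp add: mult.commute)
qed

lemma cut_lt_of_overfull:
  assumes mg: "multigraph V m" and "S \<subseteq> V" and "\<forall>v\<in>V. deg V m v \<le> k"
    and "overfull m S k"
  shows "edges_between m S (V - S) < k"
proof -
  have fin: "finite V" "finite S" using mg \<open>S \<subseteq> V\<close> by (auto simp: multigraph_def finite_subset)
  have "card S \<ge> 3" using \<open>overfull m S k\<close> by (simp add: overfull_def)
  then have "k * (card S - 1) < edges_between m S S"
    using \<open>overfull m S k\<close> tval_gt_iff[OF mg fin(2)] by (simp add: overfull_def)
  moreover have "k * card S = k * (card S - 1) + k"
    using \<open>card S \<ge> 3\<close> by (cases "card S") simp_all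
  moreover have "edges_between m S V = edges_between m S S + edges_between m S (V - S)"
    using edges_between_Un_right[of S "V - S" m S] fin \<open>S \<subseteq> V\<close> by (simp add: Un_absorb1)
  ultimately show ?thesis
    using edges_between_le_degree_bound[OF \<open>S \<subseteq> V\<close> assms(3)] by linarith
qed

definition min_slack_overfull :: "'a set \<Rightarrow> ('a \<Rightarrow> 'a \<Rightarrow> nat) \<Rightarrow> nat \<Rightarrow> 'a set \<Rightarrow> bool" where
  "min_slack_overfull V m k S \<longleftrightarrow> S \<in> odd_sets V \<and> overfull m S k
     \<and> (\<forall>R \<in> odd_sets V. overfull m R k \<longrightarrow> slack m S k \<le> slack m R k)"

lemma min_slack_overfull_le:
  assumes mg: "multigraph V m" and S: "min_slack_overfull V m k S"
    and R: "R \<in> odd_sets V" "k * (card R - 1) < edges_between m R R"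
  shows "(k + 1) * (card S - 1) + edges_between m R R
    \<le> (k + 1) * (card R - 1) + edges_between m S S"
proof -
  have fin: "finite S" "finite R"
    using mg S R by (auto simp: multigraph_def min_slack_overfull_def odd_sets_def finite_subset)
  have "overfull m R k"
    using R tval_gt_iff[OF mg fin(2)] by (simp add: overfull_def odd_sets_def)
  then have "2 * slack m S k \<le> 2 * slack m R k"
    using S R by (simp add: min_slack_overfull_def)
  moreover have "odd (card S)" "odd (card R)"
    using S R by (simp_all add: min_slack_overfull_def odd_sets_def)
  ultimately show ?thesis
    using slack_double_eq[OF mg fin(1), of k] slack_double_eq[OF mg fin(2), of k] by linarith
qed

lemma min_slack_overfull_edges_inside:
  assumes mg: "multigraph V m" and S: "min_slack_overfull V m k S"
  shows "k * (card S - 1) < edges_between m S S"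
proof -
  have "S \<subseteq> V" "overfull m S k" using S by (simp_all add: min_slack_overfull_def odd_sets_def)
  moreover have "finite S" using mg \<open>S \<subseteq> V\<close> by (simp add: multigraph_def finite_subset)
  ultimately show ?thesis using tval_gt_iff[OF mg \<open>finite S\<close>] by (auto simp: overfull_def)
qed

lemma min_slack_overfull_outside_bound:
  assumes mg: "multigraph V m" and S: "min_slack_overfull V m k S"
    and A: "A \<subseteq> V - S" "even (card A)"
  shows "edges_between m A A + 2 * edges_between m A S \<le> (k + 1) * card A"
proof (rule ccontr)
  assume big: "\<not> ?thesis"
  let ?T = "A \<union> S"
  have SV: "S \<subseteq> V" and oddS: "odd (card S)" and "card S \<ge> 3"
    using S by (simp_all add: min_slack_overfull_def odd_sets_def)
  have fin: "finite A" "finite S"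
    using mg SV A by (auto simp: multigraph_def finite_subset)
  have disj: "A \<inter> S = {}" using A by auto
  have card_T: "card ?T = card A + card S" using fin disj by (simp add: card_Un_disjoint)
  then have card: "card ?T - 1 = (card S - 1) + card A" using \<open>card S \<ge> 3\<close> by simp
  have edges: "edges_between m ?T ?T
    = edges_between m A A + 2 * edges_between m A S + edges_between m S S"
    using edges_between_disjoint_Un_self[OF mg fin disj] .
  have over_S: "k * (card S - 1) < edges_between m S S"
    using min_slack_overfull_edges_inside[OF mg S] .
  have "?T \<in> odd_sets V"
    using SV A oddS card_T \<open>card S \<ge> 3\<close> by (auto simp: odd_sets_def)
  moreover have "k * (card ?T - 1) < edges_between m ?T ?T"
    using big over_S unfolding card edges distrib_left by (simp add: add_mult_distrib)
  ultimately have "(k + 1) * (card S - 1) + edges_between m ?T ?T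
      \<le> (k + 1) * (card ?T - 1) + edges_between m S S"
    by (rule min_slack_overfull_le[OF mg S])
  then show False
    using big unfolding card edges distrib_left by linarith
qed

text \<open>By the degree bound, a violation \<open>e(A,A) + 2 e(A,S\<^sup>c) > (k + 1)|A|\<close> gives
  \<open>e(A,A) + 2 e(A,S - A) + |A| < k|A|\<close>. Then \<open>S - A\<close> is overfull of smaller slack than \<open>S\<close>,
  or, if it is a single vertex, \<open>S\<close> itself is not overfull.\<close>

lemma min_slack_overfull_inside_bound:
  assumes mg: "multigraph V m" and S: "min_slack_overfull V m k S"
    and deg: "\<forall>v\<in>V. deg V m v \<le> k" and A: "A \<subseteq> S" "even (card A)"
  shows "edges_between m A A + 2 * edges_between m A (V - S) \<le> (k + 1) * card A"
proof (rule ccontr)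
  assume big: "\<not> ?thesis"
  define B where "B = S - A"
  have SV: "S \<subseteq> V" and oddS: "odd (card S)"
    using S by (auto simp: min_slack_overfull_def odd_sets_def)
  have fin: "finite A" "finite B" "finite S" "finite V"
    using mg SV A by (auto simp: B_def multigraph_def finite_subset)
  have S_eq: "S = A \<union> B" and disj: "A \<inter> B = {}" using A by (auto simp: B_def)
  have card: "card S = card A + card B" using fin disj S_eq card_Un_disjoint by blast
  have edges_S: "edges_between m S S
    = edges_between m A A + 2 * edges_between m A B + edges_between m B B"
    using edges_between_disjoint_Un_self[OF mg fin(1,2) disj] S_eq by simp
  have "edges_between m A V
      = edges_between m A A + edges_between m A B + edges_between m A (V - S)"
    using edges_between_Un_right[of S "V - S" m A] edges_between_Un_right[OF fin(1,2) disj]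
      fin SV S_eq by (simp add: Un_absorb1)
  then have "edges_between m A A + edges_between m A B + edges_between m A (V - S) \<le> k * card A"
    using edges_between_le_degree_bound[OF _ deg, of A] A SV by simp
  then have key: "edges_between m S S + card A < edges_between m B B + k * card A"
    using big edges_S by (simp add: add_mult_distrib)
  have "card B \<ge> 1" using oddS card A(2) by presburger
  then have card_S: "card S - 1 = (card B - 1) + card A" using card by simp
  have over_S: "k * (card B - 1) + k * card A < edges_between m S S"
    using min_slack_overfull_edges_inside[OF mg S] by (simp only: card_S distrib_left)
  show False
  proof (cases "card B \<ge> 3")
    case False
    then have "card B = 1" using oddS card A(2) by presburger
    then have "edges_between m B B = 0"
      using edges_between_singleton_self[OF mg] by (auto simp: card_Suc_eq)
    then show False using key over_S \<open>card B = 1\<close> by simp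
  next
    case True
    have "B \<in> odd_sets V" using True oddS card A(2) SV by (auto simp: odd_sets_def B_def)
    moreover have "k * (card B - 1) < edges_between m B B" using key over_S by linarith
    ultimately have "(k + 1) * (card S - 1) + edges_between m B B
        \<le> (k + 1) * (card B - 1) + edges_between m S S"
      by (rule min_slack_overfull_le[OF mg S])
    then show False
      using key unfolding card_S distrib_left by (simp add: add_mult_distrib)
  qed
qed

lemma shrinkV_eq: "shrinkV V X = insert None (Some ` (V - X))"
  by (auto simp: shrinkV_def)

lemma multigraph_shrink:
  assumes "multigraph V m"
  shows "multigraph (shrinkV V X) (shrinkM V m X)"
proof -
  have sym: "\<And>x y. m x y = m y x" and loop: "\<And>x. m x x = 0"
    and supp: "\<And>x y. m x y > 0 \<Longrightarrow> x \<in> V \<and> y \<in> V" and "finite V"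
    using assms unfolding multigraph_def by blast+
  have "shrinkM V m X x y = shrinkM V m X y x" for x y
    by (cases x; cases y) (simp_all add: sym)
  moreover have "shrinkM V m X x x = 0" for x
    by (cases x) (simp_all add: loop)
  moreover have "x \<in> shrinkV V X \<and> y \<in> shrinkV V X" if "shrinkM V m X x y > 0" for x y
    using that supp by (cases x; cases y) (auto simp: shrinkV_eq split: if_splits)
  moreover have "finite (shrinkV V X)" using \<open>finite V\<close> by (simp add: shrinkV_eq)
  ultimately show ?thesis unfolding multigraph_def by blast
qed

lemma deg_shrink_Some:
  assumes "multigraph V m" "X \<subseteq> V" "u \<in> V - X"
  shows "deg (shrinkV V X) (shrinkM V m X) (Some u) = deg V m u"
proof -
  have "finite V" using assms(1) by (simp add: multigraph_def)
  have "deg (shrinkV V X) (shrinkM V m X) (Some u) = (\<Sum>w\<in>X. m u w) + (\<Sum>v\<in>V - X. m u v)"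
    unfolding deg_def shrinkV_eq using \<open>finite V\<close> assms(3) by (simp add: sum.reindex)
  also have "\<dots> = deg V m u"
    unfolding deg_def using \<open>finite V\<close> assms(2) by (metis add.commute sum.subset_diff)
  finally show ?thesis .
qed

lemma deg_shrink_None:
  assumes "finite V"
  shows "deg (shrinkV V X) (shrinkM V m X) None = edges_between m (V - X) X"
  unfolding deg_def shrinkV_eq edges_between_def using assms by (simp add: sum.reindex)

lemma edges_between_shrink_Some:
  "A \<subseteq> V - X \<Longrightarrow> edges_between (shrinkM V m X) (Some ` A) (Some ` A) = edges_between m A A"
  unfolding edges_between_def by (simp add: sum.reindex) (intro sum.cong refl; auto)

lemma edges_between_shrink_None:
  "A \<subseteq> V - X \<Longrightarrow> edges_between (shrinkM V m X) {None} (Some ` A) = edges_between m A X"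
  unfolding edges_between_def by (simp add: sum.reindex) (intro sum.cong refl; auto)

lemma subset_shrinkV_cases:
  assumes "R \<subseteq> shrinkV V X"
  obtains A where "A \<subseteq> V - X" "R = Some ` A \<or> R = insert None (Some ` A)"
proof
  let ?A = "{a. Some a \<in> R}"
  show "?A \<subseteq> V - X" using assms by (auto simp: shrinkV_eq)
  have "R - {None} = Some ` ?A" by (auto intro: option.exhaust)
  then show "R = Some ` ?A \<or> R = insert None (Some ` ?A)" by blast
qed

lemma maxdeg_shrink_le:
  assumes mg: "multigraph V m" and "X \<subseteq> V" and "\<forall>v\<in>V. deg V m v \<le> k"
    and "edges_between m (V - X) X \<le> k"
  shows "maxdeg (shrinkV V X) (shrinkM V m X) \<le> k"
proof -
  have "finite V" using mg by (simp add: multigraph_def)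
  then show ?thesis
    using assms deg_shrink_Some[OF mg] deg_shrink_None[OF \<open>finite V\<close>]
    by (subst maxdeg_le_iff) (auto simp: shrinkV_eq)
qed

lemma num_deg_shrink_le:
  assumes mg: "multigraph V m" and "X \<subseteq> V" and "edges_between m (V - X) X \<noteq> k"
  shows "num_deg (shrinkV V X) (shrinkM V m X) k \<le> num_deg V m k"
proof -
  have "finite V" using mg by (simp add: multigraph_def)
  have "{v \<in> shrinkV V X. deg (shrinkV V X) (shrinkM V m X) v = k} \<subseteq> Some ` {u \<in> V. deg V m u = k}"
    using assms deg_shrink_Some[OF mg] deg_shrink_None[OF \<open>finite V\<close>] by (auto simp: shrinkV_eq)
  then have "num_deg (shrinkV V X) (shrinkM V m X) k \<le> card (Some ` {u \<in> V. deg V m u = k})"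
    unfolding num_deg_def using \<open>finite V\<close> by (intro card_mono) auto
  also have "\<dots> = num_deg V m k" unfolding num_deg_def by (simp add: card_image)
  finally show ?thesis .
qed

lemma tval_shrink_Some_image:
  assumes mg: "multigraph V m" and A: "A \<subseteq> V - X"
  shows "tval (shrinkM V m X) (Some ` A) = tval m A"
proof -
  have "finite A" using mg A by (auto simp: multigraph_def finite_subset)
  then show ?thesis
    using tval_eq_edges_between[OF multigraph_shrink[OF mg]] tval_eq_edges_between[OF mg] edges_between_shrink_Some[OF A]
    by (simp add: card_image)
qed

lemma tval_shrink_le:
  assumes mg: "multigraph V m"
    and odd_bound: "\<forall>R\<in>odd_sets V. tval m R \<le> real c"
    and even_bound: "\<forall>A \<subseteq> V - X. even (card A) \<longrightarrow>
      edges_between m A A + 2 * edges_between m A X \<le> c * card A"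
    and R: "R \<in> odd_sets (shrinkV V X)"
  shows "tval (shrinkM V m X) R \<le> real c"
proof -
  have "finite V" using mg by (simp add: multigraph_def)
  have mg': "multigraph (shrinkV V X) (shrinkM V m X)" using multigraph_shrink[OF mg] .
  obtain A where A: "A \<subseteq> V - X" and R_cases: "R = Some ` A \<or> R = insert None (Some ` A)"
    using R by (auto simp: odd_sets_def elim: subset_shrinkV_cases)
  have "finite A" using A \<open>finite V\<close> finite_subset by blast
  show ?thesis
  proof (cases "R = Some ` A")
    case True
    then have "A \<in> odd_sets V" using R A by (auto simp: odd_sets_def card_image)
    then show ?thesis using True odd_bound tval_shrink_Some_image[OF mg A] by simp
  next
    case False
    then have R_eq: "R = {None} \<union> Some ` A" using R_cases by simp
    have card: "card R = card A + 1" using \<open>finite A\<close> by (simp add: R_eq card_image)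
    have "edges_between (shrinkM V m X) R R = edges_between m A A + 2 * edges_between m A X"
      using edges_between_disjoint_Un_self[OF mg', of "{None}" "Some ` A"] \<open>finite A\<close>
        edges_between_singleton_self[OF mg'] edges_between_shrink_Some[OF A]
        edges_between_shrink_None[OF A]
      by (simp add: R_eq)
    then have "edges_between (shrinkM V m X) R R \<le> c * (card R - 1)"
      using even_bound A R card by (simp add: odd_sets_def)
    then show ?thesis
      using tval_gt_iff[OF mg' _, of R c] mg' R
      by (auto simp: odd_sets_def not_less multigraph_def finite_subset)
  qed
qed

lemma shrink_bounds:
  assumes mg: "multigraph V m" and X: "X \<subseteq> V"
    and deg: "\<forall>v\<in>V. deg V m v \<le> k"
    and cut: "edges_between m (V - X) X < k"
    and odd_bound: "\<forall>R\<in>odd_sets V. tval m R \<le> real (k + 1)"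
    and even_bound: "\<forall>A \<subseteq> V - X. even (card A) \<longrightarrow>
      edges_between m A A + 2 * edges_between m A X \<le> (k + 1) * card A"
  shows "maxdeg (shrinkV V X) (shrinkM V m X) \<le> k
    \<and> (odd_sets (shrinkV V X) \<noteq> {} \<longrightarrow> Gamma (shrinkV V X) (shrinkM V m X) \<le> real (k + 1))
    \<and> num_deg (shrinkV V X) (shrinkM V m X) k \<le> num_deg V m k"
proof (intro conjI impI)
  show "maxdeg (shrinkV V X) (shrinkM V m X) \<le> k"
    using maxdeg_shrink_le[OF mg X deg] cut by simp
  show "num_deg (shrinkV V X) (shrinkM V m X) k \<le> num_deg V m k"
    using num_deg_shrink_le[OF mg X] cut by simp
  assume "odd_sets (shrinkV V X) \<noteq> {}"
  moreover have "finite (shrinkV V X)" using multigraph_shrink[OF mg] by (simp add: multigraph_def)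
  ultimately show "Gamma (shrinkV V X) (shrinkM V m X) \<le> real (k + 1)"
    using tval_shrink_le[OF mg odd_bound even_bound] by (simp add: Gamma_le_iff)
qed

theorem mainTheorem6:
  fixes V :: "'a set" and m :: "'a \<Rightarrow> 'a \<Rightarrow> nat" and d r :: nat and S :: "'a set"
  assumes "multigraph V m"
    and "even (card V)"
    and "maxdeg V m \<le> d + 1"
    and "num_deg V m (d + 1) = r"
    and "real d + 1 < Gamma V m" and "Gamma V m \<le> real d + 2"
    and "S \<subseteq> V" and "odd (card S)" and "card S \<ge> 3"
    and "overfull m S (d + 1)"
    and "\<forall>R \<in> odd_sets V. overfull m R (d + 1) \<longrightarrow> slack m S (d + 1) \<le> slack m R (d + 1)"
  shows "maxdeg (shrinkV V S) (shrinkM V m S) \<le> d + 1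
       \<and> (odd_sets (shrinkV V S) \<noteq> {} \<longrightarrow> Gamma (shrinkV V S) (shrinkM V m S) \<le> real d + 2)
       \<and> num_deg (shrinkV V S) (shrinkM V m S) (d + 1) \<le> r
       \<and> maxdeg (shrinkV V (V - S)) (shrinkM V m (V - S)) \<le> d + 1
       \<and> (odd_sets (shrinkV V (V - S)) \<noteq> {} \<longrightarrow> Gamma (shrinkV V (V - S)) (shrinkM V m (V - S)) \<le> real d + 2)
       \<and> num_deg (shrinkV V (V - S)) (shrinkM V m (V - S)) (d + 1) \<le> r"
proof -
  note mg = assms(1)
  have "finite V" using mg by (simp add: multigraph_def)
  have deg: "\<forall>v\<in>V. deg V m v \<le> d + 1"
    using deg_le_maxdeg[OF \<open>finite V\<close>] assms(3) order_trans by blast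
  have two: "real (d + 1 + 1) = real d + 2" by simp
  have odd_bound: "\<forall>R\<in>odd_sets V. tval m R \<le> real (d + 1 + 1)"
    unfolding two using tval_le_Gamma[OF \<open>finite V\<close>, of _ m] assms(6) by (auto intro: order_trans)
  have min: "min_slack_overfull V m (d + 1) S"
    using assms(7-11) by (simp add: min_slack_overfull_def odd_sets_def)
  have cut: "edges_between m S (V - S) < d + 1"
    using cut_lt_of_overfull[OF mg assms(7) deg assms(10)] .
  have co_co_S: "V - (V - S) = S" using assms(7) by auto
  have cut_S: "edges_between m (V - S) S < d + 1"
    using cut edges_between_commute[OF mg] by metis
  have cut_co_S: "edges_between m (V - (V - S)) (V - S) < d + 1"
    using cut co_co_S by simp
  have outside: "\<forall>A \<subseteq> V - S. even (card A) \<longrightarrow>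
      edges_between m A A + 2 * edges_between m A S \<le> (d + 1 + 1) * card A"
    using min_slack_overfull_outside_bound[OF mg min] by blast
  have inside: "\<forall>A \<subseteq> V - (V - S). even (card A) \<longrightarrow>
      edges_between m A A + 2 * edges_between m A (V - S) \<le> (d + 1 + 1) * card A"
    using min_slack_overfull_inside_bound[OF mg min deg] co_co_S by simp
  show ?thesis
    using shrink_bounds[OF mg assms(7) deg cut_S odd_bound outside, unfolded two]
      shrink_bounds[OF mg Diff_subset deg cut_co_S odd_bound inside, unfolded two]
    unfolding assms(4)[symmetric] by blast
qed

end
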